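(* Let $H=\sum_{a\in\mathcal T}\lambda_aQ_a$ be a Pauli Hamiltonian on $n$ qubits ($d=2^n$) with $|\lambda_a|\le1$ and $|\mathrm{supp}(Q_a)|\le w$ for all $a$, such that each qubit lies in the support of at most $\ell$ terms $Q_a$. Fix an ordering $(a_1,\dots,a_M)$ of $\mathcal T$, a step size $\delta>0$, an integer $p\ge0$, and set $\beta:=(p+1)\delta$, $L:=(p+1)M$, with the periodic convention $a_{j+qM}:=a_j$. Define $\mathcal M_j(X):=e^{\delta\lambda_{a_j}Q_{a_j}}Xe^{\delta\lambda_{a_j}Q_{a_j}}$ for $j=1,\dots,L$, $A_j:=\mathcal M_j\circ\cdots\circ\mathcal M_1(\mathbb I)$, and, for an integer cutoff $k\ge1$ and an observable $O$, the weight-truncated backward propagation $O_L:=O$, $O_{j-1}:=\Pi_{<k}\big(\mathcal M_j^\dagger(O_j)\big)$ for $j=L,\dots,1$. Let $g:=2e\,\beta\,\ell\,w\,e^{\delta}$. If $g\le1$, then $$\big|\operatorname{Tr}(O_0)-\operatorname{Tr}(OA_L)\big|\le d\,e^{4\beta M}\,g^{\lceil k/w\rceil}\,\|O\|_{\mathrm{Pauli},1}.$$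
   Context: $\mathcal P_n=\{I,X,Y,Z\}^{\otimes n}$; the weight $|Q|$ of $Q\in\mathcal P_n$ is its number of non-identity factors and $\mathrm{supp}(Q)$ its set of non-identity positions. For an operator $X$, $\langle Q,X\rangle:=\frac1d\operatorname{Tr}(QX)$ and $\|X\|_{\mathrm{Pauli},1}:=\sum_{Q\in\mathcal P_n}|\langle Q,X\rangle|$. $\Pi_{<k}(X):=\sum_{|Q|<k}\langle Q,X\rangle Q$ is the projector onto the span of Pauli strings of weight $<k$. $\mathcal M_j^\dagger$ is the Hilbert–Schmidt adjoint of $\mathcal M_j$. *)

theory Defs
  imports Complex_Main "Jordan_Normal_Form.Matrix"
begin

datatype pauli = PI | PX | PY | PZ

fun pauli1 :: "pauli \<Rightarrow> nat \<Rightarrow> nat \<Rightarrow> complex" where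
  "pauli1 PI i j = (if i = j then 1 else 0)"
| "pauli1 PX i j = (if i \<noteq> j then 1 else 0)"
| "pauli1 PY i j = (if i = j then 0 else if i = 0 then - \<i> else \<i>)"
| "pauli1 PZ i j = (if i = j then (if i = 0 then 1 else -1) else 0)"

text \<open>A Pauli string is a list of length n; its matrix is the n-fold tensor product,
  acting on the 2^n dimensional space with computational basis indexed by bitstrings
  (bit q of the index = state of qubit q).\<close>
definition pauli_mat :: "nat \<Rightarrow> pauli list \<Rightarrow> complex mat" where
  "pauli_mat n P = mat (2^n) (2^n)
     (\<lambda>(i,j). \<Prod>q<n. pauli1 (P ! q) (i div 2^q mod 2) (j div 2^q mod 2))"

definition pauli_strings :: "nat \<Rightarrow> pauli list set" where
  "pauli_strings n = {P. length P = n}"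

definition supp :: "pauli list \<Rightarrow> nat set" where
  "supp P = {q. q < length P \<and> P ! q \<noteq> PI}"

definition weight :: "pauli list \<Rightarrow> nat" where
  "weight P = card (supp P)"

definition mtrace :: "complex mat \<Rightarrow> complex" where
  "mtrace A = (\<Sum>i<dim_row A. A $$ (i,i))"

definition ctrans :: "complex mat \<Rightarrow> complex mat" where
  "ctrans A = mat (dim_col A) (dim_row A) (\<lambda>(i,j). cnj (A $$ (j,i)))"

definition mexp :: "complex mat \<Rightarrow> complex mat" where
  "mexp A = mat (dim_row A) (dim_col A) (\<lambda>(i,j). \<Sum>m. (A ^\<^sub>m m) $$ (i,j) / of_nat (fact m))"

definition pcoef :: "nat \<Rightarrow> pauli list \<Rightarrow> complex mat \<Rightarrow> complex" where
  "pcoef n Q X = mtrace (pauli_mat n Q * X) / 2^n"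

definition pauli_norm1 :: "nat \<Rightarrow> complex mat \<Rightarrow> real" where
  "pauli_norm1 n X = (\<Sum>Q\<in>pauli_strings n. cmod (pcoef n Q X))"

definition trunc :: "nat \<Rightarrow> nat \<Rightarrow> complex mat \<Rightarrow> complex mat" where
  "trunc n k X = mat (2^n) (2^n)
     (\<lambda>(i,j). \<Sum>Q\<in>{Q\<in>pauli_strings n. weight Q < k}. pcoef n Q X * pauli_mat n Q $$ (i,j))"

definition Mmap :: "nat \<Rightarrow> real \<Rightarrow> pauli list \<Rightarrow> complex mat \<Rightarrow> complex mat" where
  "Mmap n c Q X = mexp (of_real c \<cdot>\<^sub>m pauli_mat n Q) * X * mexp (of_real c \<cdot>\<^sub>m pauli_mat n Q)"

text \<open>Hilbert--Schmidt adjoint of \<open>X \<mapsto> E X E\<close>: \<open>Y \<mapsto> E^\<dagger> Y E^\<dagger>\<close>.\<close>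
definition Madj :: "nat \<Rightarrow> real \<Rightarrow> pauli list \<Rightarrow> complex mat \<Rightarrow> complex mat" where
  "Madj n c Q Y = ctrans (mexp (of_real c \<cdot>\<^sub>m pauli_mat n Q)) * Y
                  * ctrans (mexp (of_real c \<cdot>\<^sub>m pauli_mat n Q))"

definition term_at :: "'a list \<Rightarrow> nat \<Rightarrow> 'a" where
  "term_at ord j = ord ! ((j - 1) mod length ord)"

fun fwd :: "(nat \<Rightarrow> complex mat \<Rightarrow> complex mat) \<Rightarrow> complex mat \<Rightarrow> nat \<Rightarrow> complex mat" where
  "fwd F X 0 = X"
| "fwd F X (Suc j) = F (Suc j) (fwd F X j)"

text \<open>Backward: \<open>bwd G L Y i = O_{L-i}\<close> where \<open>O_L = O\<close>, \<open>O_{j-1} = G j O_j\<close>.\<close>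
fun bwd :: "(nat \<Rightarrow> complex mat \<Rightarrow> complex mat) \<Rightarrow> nat \<Rightarrow> complex mat \<Rightarrow> nat \<Rightarrow> complex mat" where
  "bwd G L Y 0 = Y"
| "bwd G L Y (Suc i) = G (L - i) (bwd G L Y i)"

end

(* Let H t = Tr(O_t A_t), so that H 0 = Tr(O_0) and H L = Tr(O A_L). As M_(t+1)^dagger is the
   adjoint of M_(t+1), the increment H (t+1) - H t only sees the Pauli components of weight at
   least k that the truncation removes from M_(t+1)^dagger(O_(t+1)); by Parseval it is at most d
   times their 1-norm times the largest Pauli coefficient of weight at least k of A_t.

   Conjugation by e^(cP) = cosh c + sinh c P turns the coefficient of R into a combination of the
   coefficients of R and of P R, with weights at most cosh 2c and sinh 2c. Hence the Pauli 1-norm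
   grows by at most e^(2 delta) per step, so the removed masses telescope to at most
   e^(2 delta L) ||O||; and the coefficient of R in A_t is bounded by a sum over the sets of steps
   whose supports cover supp R. Such a set contains at least ceil(|R| / w) of the at most
   (p+1) ell |R| steps touching supp R, and counting these sets gives g^ceil(k/w) e^(2 delta t). *)

theory Submission
  imports Defs
begin

section \<open>Pauli algebra\<close>

lemma UNIV_pauli: "(UNIV :: pauli set) = {PI, PX, PY, PZ}"
  by (auto intro: pauli.exhaust)

instance pauli :: finite
  by standard (simp add: UNIV_pauli)

lemma sum_UNIV_pauli: "(\<Sum>x\<in>UNIV. f x) = f PI + f PX + f PY + f PZ"
  by (simp add: UNIV_pauli add.assoc)

fun pauli1_mul :: "pauli \<Rightarrow> pauli \<Rightarrow> pauli" where
  "pauli1_mul PI b = b" | "pauli1_mul a PI = a"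
| "pauli1_mul PX PX = PI" | "pauli1_mul PX PY = PZ" | "pauli1_mul PX PZ = PY"
| "pauli1_mul PY PX = PZ" | "pauli1_mul PY PY = PI" | "pauli1_mul PY PZ = PX"
| "pauli1_mul PZ PX = PY" | "pauli1_mul PZ PY = PX" | "pauli1_mul PZ PZ = PI"

fun pauli1_phase :: "pauli \<Rightarrow> pauli \<Rightarrow> complex" where
  "pauli1_phase PI b = 1" | "pauli1_phase a PI = 1"
| "pauli1_phase PX PX = 1" | "pauli1_phase PX PY = \<i>" | "pauli1_phase PX PZ = - \<i>"
| "pauli1_phase PY PX = - \<i>" | "pauli1_phase PY PY = 1" | "pauli1_phase PY PZ = \<i>"
| "pauli1_phase PZ PX = \<i>" | "pauli1_phase PZ PY = - \<i>" | "pauli1_phase PZ PZ = 1"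

lemma pauli1_mul_comm: "pauli1_mul a b = pauli1_mul b a"
  by (cases a; cases b) auto

lemma pauli1_mul_cancel [simp]: "pauli1_mul a (pauli1_mul a b) = b"
  by (cases a; cases b) auto

lemma pauli1_mul_eq_PI_iff: "pauli1_mul a b = PI \<longleftrightarrow> a = b"
  by (cases a; cases b) auto

lemma pauli1_mul_self [simp]: "pauli1_mul a a = PI"
  by (cases a) auto

lemma pauli1_phase_self [simp]: "pauli1_phase a a = 1"
  by (cases a) auto

lemma norm_pauli1_phase [simp]: "cmod (pauli1_phase a b) = 1"
  by (cases a; cases b) auto

lemma less_2_cases: "(i::nat) < 2 \<Longrightarrow> i = 0 \<or> i = 1"
  by auto

lemma pauli1_mult:
  assumes "i < 2" "j < 2"
  shows "pauli1 a i 0 * pauli1 b 0 j + pauli1 a i 1 * pauli1 b 1 j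
         = pauli1_phase a b * pauli1 (pauli1_mul a b) i j"
  using less_2_cases[OF assms(1)] less_2_cases[OF assms(2)]
  by (cases a; cases b) auto

lemma pauli1_trace: "pauli1 a 0 0 + pauli1 a 1 1 = (if a = PI then 2 else 0)"
  by (cases a) auto

lemma pauli1_hermitian: "i < 2 \<Longrightarrow> j < 2 \<Longrightarrow> pauli1 a j i = cnj (pauli1 a i j)"
  by (cases a) auto

lemma pauli1_completeness:
  assumes "a < 2" "b < 2" "i < 2" "j < 2"
  shows "(\<Sum>x\<in>UNIV. pauli1 x a b * pauli1 x i j) = (if a = j \<and> b = i then 2 else 0)"
  using less_2_cases[OF assms(1)] less_2_cases[OF assms(2)]
    less_2_cases[OF assms(3)] less_2_cases[OF assms(4)]
  unfolding sum_UNIV_pauli by auto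

lemma sum_prod_binary_digits:
  fixes f :: "nat \<Rightarrow> nat \<Rightarrow> 'a::comm_semiring_1"
  shows "(\<Sum>i<2^n. \<Prod>q<n. f q (i div 2^q mod 2)) = (\<Prod>q<n. f q 0 + f q 1)"
proof (induction n)
  case 0
  then show ?case by simp
next
  case (Suc n)
  have split: "(\<Sum>i<2^Suc n. g i) = (\<Sum>i<2^n. g i) + (\<Sum>i<2^n. g (i + 2^n))" for g :: "nat \<Rightarrow> 'a"
  proof -
    have "(\<Sum>i<2^Suc n. g i) = (\<Sum>i\<in>{0..<2^n}. g i) + (\<Sum>i\<in>{2^n..<2^n+2^n}. g i)"
      by (simp add: lessThan_atLeast0 sum.atLeastLessThan_concat mult_2)
    also have "(\<Sum>i\<in>{2^n..<2^n+2^n}. g i) = (\<Sum>i\<in>{0..<2^n}. g (i + 2^n))"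
      using sum.shift_bounds_nat_ivl[of g 0 "2^n" "2^n"] by simp
    finally show ?thesis by (simp add: lessThan_atLeast0)
  qed
  have low_digits: "(i + 2^n) div 2^q mod 2 = i div 2^q mod 2" if "q < n" for i q :: nat
  proof -
    have "(i + 2^n) div 2^q = i div 2^q + 2 * 2^(n - Suc q)"
      using that by (simp add: div_add1_eq[of i "2^n" "2^q"] le_imp_power_dvd
          flip: power_Suc power_diff)
    then show ?thesis by simp
  qed
  have "(\<Sum>i<2^Suc n. \<Prod>q<Suc n. f q (i div 2^q mod 2))
      = (\<Sum>i<2^n. (\<Prod>q<n. f q (i div 2^q mod 2)) * f n 0)
      + (\<Sum>i<2^n. (\<Prod>q<n. f q (i div 2^q mod 2)) * f n 1)"
    unfolding split prod.lessThan_Suc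
    by (intro arg_cong2[where f="(+)"] sum.cong refl arg_cong2[where f="(*)"] prod.cong)
       (auto simp: low_digits)
  also have "\<dots> = (\<Prod>q<n. f q 0 + f q 1) * (f n 0 + f n 1)"
    by (simp add: Suc distrib_left flip: sum_distrib_right)
  finally show ?case by simp
qed

lemma eq_if_binary_digits_eq:
  fixes i j :: nat
  assumes "i < 2^n" "j < 2^n" "\<forall>q<n. i div 2^q mod 2 = j div 2^q mod 2"
  shows "i = j"
  using assms
proof (induction n arbitrary: i j)
  case 0
  then show ?case by simp
next
  case (Suc n)
  have "i div 2 = j div 2"
  proof (rule Suc.IH)
    show "\<forall>q<n. i div 2 div 2^q mod 2 = j div 2 div 2^q mod 2"
    proof (intro allI impI)
      fix q
      assume "q < n"
      then have "i div 2^Suc q mod 2 = j div 2^Suc q mod 2"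
        using Suc.prems(3) by blast
      then show "i div 2 div 2^q mod 2 = j div 2 div 2^q mod 2"
        by (simp add: div_mult2_eq)
    qed
  qed (use Suc.prems in auto)
  moreover have "i mod 2 = j mod 2"
    using Suc.prems(3) by force
  ultimately show ?case
    by (metis div_mult_mod_eq)
qed

lemma prod_if_binary_digits_eq:
  fixes i j :: nat and c :: "'a::comm_semiring_1"
  assumes "i < 2^n" "j < 2^n"
  shows "(\<Prod>q<n. if i div 2^q mod 2 = j div 2^q mod 2 then c else 0) = (if i = j then c^n else 0)"
proof (cases "i = j")
  case False
  then obtain q where "q < n" "i div 2^q mod 2 \<noteq> j div 2^q mod 2"
    using eq_if_binary_digits_eq[OF assms] by blast
  then have "(\<Prod>q<n. if i div 2^q mod 2 = j div 2^q mod 2 then c else 0) = 0"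
    by (intro prod_zero) auto
  then show ?thesis
    using False by simp
qed simp

lemma pauli_strings_Suc:
  "pauli_strings (Suc n) = (\<lambda>(x, R). x # R) ` (UNIV \<times> pauli_strings n)"
  unfolding pauli_strings_def by (auto simp: image_iff length_Suc_conv)

lemma finite_pauli_strings [simp]: "finite (pauli_strings n)"
  using finite_lists_length_eq[of "UNIV :: pauli set" n] by (simp add: pauli_strings_def)

lemma sum_pauli_strings_prod:
  fixes f :: "nat \<Rightarrow> pauli \<Rightarrow> 'a::comm_semiring_1"
  shows "(\<Sum>R\<in>pauli_strings n. \<Prod>q<n. f q (R!q)) = (\<Prod>q<n. \<Sum>x\<in>UNIV. f q x)"
proof (induction n arbitrary: f)
  case 0
  then show ?case by (simp add: pauli_strings_def)
next
  case (Suc n)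
  have inj: "inj_on (\<lambda>(x, R). x # R) (UNIV \<times> pauli_strings n)"
    by (auto simp: inj_on_def)
  have "(\<Sum>R\<in>pauli_strings (Suc n). \<Prod>q<Suc n. f q (R!q))
      = (\<Sum>(x,R)\<in>UNIV \<times> pauli_strings n. f 0 x * (\<Prod>q<n. f (Suc q) (R!q)))"
    unfolding pauli_strings_Suc sum.reindex[OF inj]
    by (intro sum.cong refl)
       (auto simp only: prod.lessThan_Suc_shift nth_Cons_0 nth_Cons_Suc o_def split: prod.splits)
  also have "\<dots> = (\<Sum>x\<in>UNIV. f 0 x) * (\<Sum>R\<in>pauli_strings n. \<Prod>q<n. f (Suc q) (R!q))"
    by (simp add: sum_product flip: sum.cartesian_product)
  also have "\<dots> = (\<Sum>x\<in>UNIV. f 0 x) * (\<Prod>q<n. \<Sum>x\<in>UNIV. f (Suc q) x)"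
    using Suc.IH[of "\<lambda>q. f (Suc q)"] by simp
  finally show ?case
    by (simp only: prod.lessThan_Suc_shift)
qed

definition pauli_mul :: "pauli list \<Rightarrow> pauli list \<Rightarrow> pauli list" where
  "pauli_mul P R = map2 pauli1_mul P R"

definition pauli_phase :: "pauli list \<Rightarrow> pauli list \<Rightarrow> complex" where
  "pauli_phase P R = (\<Prod>q<length P. pauli1_phase (P!q) (R!q))"

lemma length_pauli_mul [simp]: "length R = length P \<Longrightarrow> length (pauli_mul P R) = length P"
  by (simp add: pauli_mul_def)

lemma nth_pauli_mul [simp]:
  "q < length P \<Longrightarrow> q < length R \<Longrightarrow> pauli_mul P R ! q = pauli1_mul (P!q) (R!q)"
  by (simp add: pauli_mul_def)

lemma pauli_mul_comm: "pauli_mul P R = pauli_mul R P"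
  by (auto simp: pauli_mul_def list_eq_iff_nth_eq pauli1_mul_comm)

lemma pauli_mul_cancel [simp]: "length P = length R \<Longrightarrow> pauli_mul P (pauli_mul P R) = R"
  by (simp add: list_eq_iff_nth_eq)

lemma pauli_mul_eq_replicate_PI_iff:
  "length P = n \<Longrightarrow> length R = n \<Longrightarrow> pauli_mul P R = replicate n PI \<longleftrightarrow> P = R"
  by (auto simp: list_eq_iff_nth_eq pauli1_mul_eq_PI_iff)

lemma pauli_mul_self [simp]: "pauli_mul P P = replicate (length P) PI"
  by (simp add: list_eq_iff_nth_eq)

lemma pauli_phase_self [simp]: "pauli_phase P P = 1"
  by (simp add: pauli_phase_def)

lemma norm_pauli_phase [simp]: "cmod (pauli_phase P R) = 1"
  by (simp add: pauli_phase_def flip: prod_norm)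

lemma supp_subset_pauli_mul:
  "length P = length R \<Longrightarrow> supp R \<subseteq> supp (pauli_mul P R) \<union> supp P"
  unfolding supp_def by auto

lemma supp_eq_empty_iff: "supp P = {} \<longleftrightarrow> P = replicate (length P) PI"
  by (auto simp: supp_def list_eq_iff_nth_eq)

lemma finite_supp [simp]: "finite (supp P)"
  by (simp add: supp_def)

lemma sum_pauli_strings_reindex_mul:
  "length P = n \<Longrightarrow> (\<Sum>R\<in>pauli_strings n. f (pauli_mul P R)) = (\<Sum>R\<in>pauli_strings n. f R)"
  by (rule sum.reindex_bij_witness[of _ "pauli_mul P" "pauli_mul P"])
     (auto simp: pauli_strings_def)

lemma pauli_mat_carrier [simp]: "pauli_mat n P \<in> carrier_mat (2^n) (2^n)"
  by (simp add: pauli_mat_def)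

lemma dim_pauli_mat [simp]: "dim_row (pauli_mat n P) = 2^n" "dim_col (pauli_mat n P) = 2^n"
  by (simp_all add: pauli_mat_def)

lemma index_pauli_mat:
  "i < 2^n \<Longrightarrow> j < 2^n \<Longrightarrow>
   pauli_mat n P $$ (i,j) = (\<Prod>q<n. pauli1 (P ! q) (i div 2^q mod 2) (j div 2^q mod 2))"
  by (simp add: pauli_mat_def)

lemma index_mult_mat_square:
  assumes "A \<in> carrier_mat d d" "B \<in> carrier_mat d d" "i < d" "j < d"
  shows "(A * B) $$ (i,j) = (\<Sum>l<d. A $$ (i,l) * B $$ (l,j))"
  using assms by (simp add: scalar_prod_def lessThan_atLeast0)

lemma pauli_mat_mult:
  assumes "length P = n" "length R = n"
  shows "pauli_mat n P * pauli_mat n R = pauli_phase P R \<cdot>\<^sub>m pauli_mat n (pauli_mul P R)"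
proof (rule eq_matI)
  fix i j
  assume "i < dim_row (pauli_phase P R \<cdot>\<^sub>m pauli_mat n (pauli_mul P R))"
    "j < dim_col (pauli_phase P R \<cdot>\<^sub>m pauli_mat n (pauli_mul P R))"
  then have i: "i < 2^n" and j: "j < 2^n" by auto
  let ?b = "\<lambda>i q. i div 2^q mod 2"
  have "(pauli_mat n P * pauli_mat n R) $$ (i,j)
     = (\<Sum>l<2^n. \<Prod>q<n. pauli1 (P!q) (?b i q) (?b l q) * pauli1 (R!q) (?b l q) (?b j q))"
    using i j
    by (simp add: index_mult_mat_square[OF pauli_mat_carrier pauli_mat_carrier i j]
        index_pauli_mat prod.distrib)
  also have "\<dots> = (\<Prod>q<n. pauli1 (P!q) (?b i q) 0 * pauli1 (R!q) 0 (?b j q)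
                        + pauli1 (P!q) (?b i q) 1 * pauli1 (R!q) 1 (?b j q))"
    by (rule sum_prod_binary_digits)
  also have "\<dots> = (\<Prod>q<n. pauli1_phase (P!q) (R!q) * pauli1 (pauli1_mul (P!q) (R!q)) (?b i q) (?b j q))"
    by (intro prod.cong refl pauli1_mult) auto
  also have "\<dots> = (pauli_phase P R \<cdot>\<^sub>m pauli_mat n (pauli_mul P R)) $$ (i,j)"
    using i j assms by (simp add: pauli_phase_def index_pauli_mat prod.distrib)
  finally show "(pauli_mat n P * pauli_mat n R) $$ (i,j)
      = (pauli_phase P R \<cdot>\<^sub>m pauli_mat n (pauli_mul P R)) $$ (i,j)" .
qed auto

lemma pauli_mat_replicate_PI: "pauli_mat n (replicate n PI) = 1\<^sub>m (2^n)"
proof (rule eq_matI)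
  fix i j
  assume "i < dim_row (1\<^sub>m (2^n) :: complex mat)" "j < dim_col (1\<^sub>m (2^n) :: complex mat)"
  then have i: "i < 2^n" and j: "j < 2^n" by auto
  have "pauli_mat n (replicate n PI) $$ (i,j)
      = (\<Prod>q<n. if i div 2^q mod 2 = j div 2^q mod 2 then 1 else 0)"
    using i j by (simp add: index_pauli_mat)
  also have "\<dots> = 1\<^sub>m (2^n) $$ (i,j)"
    using i j by (simp add: prod_if_binary_digits_eq)
  finally show "pauli_mat n (replicate n PI) $$ (i,j) = 1\<^sub>m (2^n) $$ (i,j)" .
qed auto

lemma smult_one_mat [simp]: "(1::'a::monoid_mult) \<cdot>\<^sub>m A = A"
  by (rule eq_matI) auto

lemma pauli_mat_square:
  "length P = n \<Longrightarrow> pauli_mat n P * pauli_mat n P = 1\<^sub>m (2^n)"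
  by (simp add: pauli_mat_mult pauli_mat_replicate_PI)

section \<open>Trace and Pauli coefficients\<close>

lemma mtrace_mult:
  assumes "A \<in> carrier_mat d d" "B \<in> carrier_mat d d"
  shows "mtrace (A * B) = (\<Sum>i<d. \<Sum>l<d. A $$ (i,l) * B $$ (l,i))"
proof -
  have "dim_row (A * B) = d"
    using assms by simp
  then show ?thesis
    unfolding mtrace_def by (intro sum.cong) (auto simp: index_mult_mat_square[OF assms])
qed

lemma mtrace_comm:
  assumes "A \<in> carrier_mat d d" "B \<in> carrier_mat d d"
  shows "mtrace (A * B) = mtrace (B * A)"
  unfolding mtrace_mult[OF assms] mtrace_mult[OF assms(2,1)]
  by (subst sum.swap) (simp add: mult.commute)

lemma mtrace_add:
  "A \<in> carrier_mat d d \<Longrightarrow> B \<in> carrier_mat d d \<Longrightarrow> mtrace (A + B) = mtrace A + mtrace B"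
  by (simp add: mtrace_def sum.distrib)

lemma mtrace_smult: "A \<in> carrier_mat d d \<Longrightarrow> mtrace (c \<cdot>\<^sub>m A) = c * mtrace A"
  by (simp add: mtrace_def sum_distrib_left)

lemma mtrace_pauli_mat:
  assumes "length P = n"
  shows "mtrace (pauli_mat n P) = (if P = replicate n PI then 2^n else 0)"
proof -
  have "mtrace (pauli_mat n P) = (\<Sum>i<2^n. \<Prod>q<n. pauli1 (P!q) (i div 2^q mod 2) (i div 2^q mod 2))"
    by (simp add: mtrace_def index_pauli_mat)
  also have "\<dots> = (\<Prod>q<n. pauli1 (P!q) 0 0 + pauli1 (P!q) 1 1)"
    by (rule sum_prod_binary_digits)
  also have "\<dots> = (\<Prod>q<n. if P!q = PI then 2 else 0)"
    by (metis One_nat_def pauli1_trace)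
  also have "\<dots> = (if P = replicate n PI then 2^n else 0)"
  proof (cases "P = replicate n PI")
    case False
    then obtain q where "q < n" "P!q \<noteq> PI"
      using assms by (auto simp: list_eq_iff_nth_eq)
    then have "(\<Prod>q<n. if P!q = PI then (2::complex) else 0) = 0"
      by (intro prod_zero) auto
    then show ?thesis
      using False by simp
  qed simp
  finally show ?thesis .
qed

lemma mtrace_pauli_mat_mult:
  "length R = n \<Longrightarrow> length P = n \<Longrightarrow>
   mtrace (pauli_mat n R * pauli_mat n P) = (if R = P then 2^n else 0)"
  by (simp add: pauli_mat_mult mtrace_smult[OF pauli_mat_carrier] mtrace_pauli_mat
      pauli_mul_eq_replicate_PI_iff)

lemma pcoef_pauli_mat:
  "length R = n \<Longrightarrow> length P = n \<Longrightarrow> pcoef n R (pauli_mat n P) = (if R = P then 1 else 0)"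
  by (simp add: pcoef_def mtrace_pauli_mat_mult)

lemma pauli_mat_completeness:
  assumes "a < 2^n" "b < 2^n" "i < 2^n" "j < 2^n"
  shows "(\<Sum>R\<in>pauli_strings n. pauli_mat n R $$ (a,b) * pauli_mat n R $$ (i,j))
         = (if a = j \<and> b = i then 2^n else 0)"
proof -
  let ?b = "\<lambda>i q. i div 2^q mod 2"
  have "(\<Sum>R\<in>pauli_strings n. pauli_mat n R $$ (a,b) * pauli_mat n R $$ (i,j))
     = (\<Sum>R\<in>pauli_strings n. \<Prod>q<n. pauli1 (R!q) (?b a q) (?b b q) * pauli1 (R!q) (?b i q) (?b j q))"
    using assms by (simp add: index_pauli_mat prod.distrib)
  also have "\<dots> = (\<Prod>q<n. \<Sum>x\<in>UNIV. pauli1 x (?b a q) (?b b q) * pauli1 x (?b i q) (?b j q))"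
    by (rule sum_pauli_strings_prod)
  also have "\<dots> = (\<Prod>q<n. (if ?b a q = ?b j q then 1 else 0) * (if ?b b q = ?b i q then 2 else 0))"
    by (intro prod.cong refl) (simp add: pauli1_completeness)
  also have "\<dots> = (\<Prod>q<n. if ?b a q = ?b j q then 1 else 0) * (\<Prod>q<n. if ?b b q = ?b i q then 2 else 0)"
    by (rule prod.distrib)
  also have "\<dots> = (if a = j \<and> b = i then 2^n else 0)"
    using assms by (simp add: prod_if_binary_digits_eq)
  finally show ?thesis .
qed

lemma pauli_expansion:
  assumes X: "X \<in> carrier_mat (2^n) (2^n)" and a: "a < 2^n" and b: "b < 2^n"
  shows "X $$ (a,b) = (\<Sum>R\<in>pauli_strings n. pcoef n R X * pauli_mat n R $$ (a,b))"
proof -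
  have "(\<Sum>R\<in>pauli_strings n. pcoef n R X * pauli_mat n R $$ (a,b))
      = (\<Sum>R\<in>pauli_strings n. \<Sum>i<2^n. \<Sum>l<2^n.
           X $$ (l,i) * (pauli_mat n R $$ (i,l) * pauli_mat n R $$ (a,b))) / 2^n"
    unfolding pcoef_def mtrace_mult[OF pauli_mat_carrier X]
    by (simp add: sum_distrib_left sum_distrib_right sum_divide_distrib mult_ac)
  also have "(\<Sum>R\<in>pauli_strings n. \<Sum>i<2^n. \<Sum>l<2^n.
           X $$ (l,i) * (pauli_mat n R $$ (i,l) * pauli_mat n R $$ (a,b)))
     = (\<Sum>i<2^n. \<Sum>l<2^n. X $$ (l,i) * (\<Sum>R\<in>pauli_strings n. pauli_mat n R $$ (i,l) * pauli_mat n R $$ (a,b)))"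
    by (subst sum.swap) (simp add: sum.swap[of _ "pauli_strings n"] sum_distrib_left)
  also have "\<dots> = (\<Sum>i<2^n. \<Sum>l<2^n. if i = b \<and> l = a then X $$ (a,b) * 2^n else 0)"
    using a b by (intro sum.cong refl) (auto simp: pauli_mat_completeness)
  also have "\<dots> = (\<Sum>i<2^n. if i = b then X $$ (a,b) * 2^n else 0)"
    using a by (intro sum.cong refl) simp
  also have "\<dots> = X $$ (a,b) * 2^n"
    using b by simp
  finally show ?thesis by simp
qed

lemma mtrace_mult_expansion:
  assumes Y: "Y \<in> carrier_mat (2^n) (2^n)" and X: "X \<in> carrier_mat (2^n) (2^n)"
    and X_eq: "\<And>i j. i < 2^n \<Longrightarrow> j < 2^n \<Longrightarrow> X $$ (i,j) = (\<Sum>R\<in>pauli_strings n. f R * pauli_mat n R $$ (i,j))"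
  shows "mtrace (Y * X) = (\<Sum>R\<in>pauli_strings n. f R * mtrace (Y * pauli_mat n R))"
proof -
  have "mtrace (Y * X) = (\<Sum>i<2^n. \<Sum>l<2^n. \<Sum>R\<in>pauli_strings n. f R * (Y $$ (i,l) * pauli_mat n R $$ (l,i)))"
    unfolding mtrace_mult[OF Y X] by (simp add: X_eq sum_distrib_left mult_ac)
  also have "\<dots> = (\<Sum>R\<in>pauli_strings n. f R * mtrace (Y * pauli_mat n R))"
    unfolding mtrace_mult[OF Y pauli_mat_carrier]
    by (simp add: sum_distrib_left sum.swap[of _ "pauli_strings n"])
  finally show ?thesis .
qed

lemma mtrace_mult_pcoef:
  assumes X: "X \<in> carrier_mat (2^n) (2^n)" and Y: "Y \<in> carrier_mat (2^n) (2^n)"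
  shows "mtrace (Y * X) = 2^n * (\<Sum>R\<in>pauli_strings n. pcoef n R X * pcoef n R Y)"
proof -
  have "mtrace (Y * X) = (\<Sum>R\<in>pauli_strings n. pcoef n R X * mtrace (Y * pauli_mat n R))"
    by (rule mtrace_mult_expansion[OF Y X]) (simp add: pauli_expansion[OF X])
  also have "\<dots> = (\<Sum>R\<in>pauli_strings n. pcoef n R X * (2^n * pcoef n R Y))"
    by (simp add: pcoef_def mtrace_comm[OF Y pauli_mat_carrier])
  finally show ?thesis by (simp add: sum_distrib_left mult_ac)
qed

lemma trunc_carrier [simp]: "trunc n k X \<in> carrier_mat (2^n) (2^n)"
  by (simp add: trunc_def)

lemma pcoef_trunc:
  assumes S: "S \<in> pauli_strings n"
  shows "pcoef n S (trunc n k X) = (if weight S < k then pcoef n S X else 0)"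
proof -
  define f where "f R = (if weight R < k then pcoef n R X else 0)" for R
  have "mtrace (pauli_mat n S * trunc n k X) = (\<Sum>R\<in>pauli_strings n. f R * mtrace (pauli_mat n S * pauli_mat n R))"
  proof (rule mtrace_mult_expansion[OF pauli_mat_carrier trunc_carrier])
    fix i j :: nat
    assume "i < 2^n" "j < 2^n"
    then show "trunc n k X $$ (i,j) = (\<Sum>R\<in>pauli_strings n. f R * pauli_mat n R $$ (i,j))"
      by (simp add: trunc_def f_def if_distrib[of "\<lambda>c. c * _"] sum.If_cases Int_def cong: if_cong)
  qed
  also have "\<dots> = (\<Sum>R\<in>pauli_strings n. if R = S then f S * 2^n else 0)"
    using S by (intro sum.cong refl) (auto simp: pauli_strings_def mtrace_pauli_mat_mult)
  also have "\<dots> = f S * 2^n"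
    using S by simp
  finally show ?thesis
    by (simp add: pcoef_def f_def)
qed

definition pauli_tail :: "nat \<Rightarrow> nat \<Rightarrow> complex mat \<Rightarrow> real" where
  "pauli_tail n k X = (\<Sum>R\<in>{R\<in>pauli_strings n. k \<le> weight R}. cmod (pcoef n R X))"

lemma pauli_norm1_trunc_add_tail:
  "pauli_norm1 n (trunc n k X) + pauli_tail n k X = pauli_norm1 n X"
proof -
  have "pauli_norm1 n (trunc n k X)
      = (\<Sum>R\<in>pauli_strings n. if weight R < k then cmod (pcoef n R X) else 0)"
    unfolding pauli_norm1_def by (intro sum.cong refl) (simp add: pcoef_trunc)
  moreover have "pauli_tail n k X = (\<Sum>R\<in>pauli_strings n. if weight R < k then 0 else cmod (pcoef n R X))"
    unfolding pauli_tail_def by (simp add: sum.inter_filter) (intro sum.cong refl, auto)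
  ultimately show ?thesis
    unfolding pauli_norm1_def by (auto simp flip: sum.distrib intro!: sum.cong)
qed

lemma pauli_norm1_nonneg: "0 \<le> pauli_norm1 n X"
  by (simp add: pauli_norm1_def sum_nonneg)

lemma mtrace_mult_trunc_diff:
  assumes A: "A \<in> carrier_mat (2^n) (2^n)" and X: "X \<in> carrier_mat (2^n) (2^n)"
  shows "cmod (mtrace (X * A) - mtrace (trunc n k X * A))
         \<le> 2^n * (\<Sum>R\<in>{R\<in>pauli_strings n. k \<le> weight R}. cmod (pcoef n R A) * cmod (pcoef n R X))"
proof -
  have "mtrace (X * A) - mtrace (trunc n k X * A)
      = 2^n * (\<Sum>R\<in>pauli_strings n. pcoef n R A * pcoef n R X - pcoef n R A * pcoef n R (trunc n k X))"
    by (simp add: mtrace_mult_pcoef[OF A] X sum_subtractf right_diff_distrib)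
  also have "\<dots> = 2^n * (\<Sum>R\<in>{R\<in>pauli_strings n. k \<le> weight R}. pcoef n R A * pcoef n R X)"
    by (simp add: pcoef_trunc sum.inter_filter) (intro sum.cong refl, auto)
  finally have "cmod (mtrace (X * A) - mtrace (trunc n k X * A))
      = 2^n * cmod (\<Sum>R\<in>{R\<in>pauli_strings n. k \<le> weight R}. pcoef n R A * pcoef n R X)"
    by (simp add: norm_mult norm_power)
  moreover have "\<dots> \<le> 2^n * (\<Sum>R\<in>{R\<in>pauli_strings n. k \<le> weight R}. cmod (pcoef n R A * pcoef n R X))"
    by (intro mult_left_mono norm_sum) auto
  ultimately show ?thesis
    by (simp add: norm_mult)
qed

section \<open>Exponentials of Pauli strings\<close>

lemma smult_smult_mat: "a \<cdot>\<^sub>m (b \<cdot>\<^sub>m A) = (a * b) \<cdot>\<^sub>m (A :: 'a::semigroup_mult mat)"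
  by (rule eq_matI) (auto simp: mult.assoc)

lemma power_smult_pauli_mat:
  assumes "length P = n"
  shows "(c \<cdot>\<^sub>m pauli_mat n P) ^\<^sub>m m = c^m \<cdot>\<^sub>m (if even m then 1\<^sub>m (2^n) else pauli_mat n P)"
proof (induction m)
  case 0
  then show ?case by (rule eq_matI) auto
next
  case (Suc m)
  let ?B = "if even m then 1\<^sub>m (2^n) else pauli_mat n P"
  have B: "?B \<in> carrier_mat (2^n) (2^n)"
    by simp
  have "(c \<cdot>\<^sub>m pauli_mat n P) ^\<^sub>m Suc m = (c^m \<cdot>\<^sub>m ?B) * (c \<cdot>\<^sub>m pauli_mat n P)"
    by (simp only: pow_mat.simps Suc.IH)
  also have "\<dots> = (c^m * c) \<cdot>\<^sub>m (?B * pauli_mat n P)"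
    by (simp only: mult_smult_assoc_mat[OF B smult_carrier_mat[OF pauli_mat_carrier]]
        mult_smult_distrib[OF B pauli_mat_carrier] smult_smult_mat)
  also have "?B * pauli_mat n P = (if even (Suc m) then 1\<^sub>m (2^n) else pauli_mat n P)"
    using assms by (simp add: pauli_mat_square)
  finally show ?case
    by (simp add: mult.commute)
qed

lemma mexp_pauli_mat:
  assumes "length P = n"
  shows "mexp (of_real c \<cdot>\<^sub>m pauli_mat n P)
         = of_real (cosh c) \<cdot>\<^sub>m 1\<^sub>m (2^n) + of_real (sinh c) \<cdot>\<^sub>m pauli_mat n P"
    (is "_ = ?E")
proof (rule eq_matI)
  fix i j
  assume "i < dim_row ?E" "j < dim_col ?E"
  then have i: "i < 2^n" and j: "j < 2^n" by auto
  let ?d = "(1\<^sub>m (2^n) :: complex mat) $$ (i,j)" and ?p = "pauli_mat n P $$ (i,j)"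
  have power_entry: "((of_real c \<cdot>\<^sub>m pauli_mat n P) ^\<^sub>m m) $$ (i,j) / of_nat (fact m)
      = of_real (if even m then c^m / fact m else 0) * ?d
        + of_real (if even m then 0 else c^m / fact m) * ?p" for m
    using i j assms by (simp add: power_smult_pauli_mat)
  have "(\<lambda>m. of_real (if even m then c^m / fact m else 0) * ?d
           + of_real (if even m then 0 else c^m / fact m) * ?p)
        sums (of_real (cosh c) * ?d + of_real (sinh c) * ?p)"
    using cosh_converges[of c] sinh_converges[of c]
    by (intro sums_add sums_mult2 sums_of_real) (simp_all add: divide_inverse_commute cong: if_cong)
  then have "(\<Sum>m. ((of_real c \<cdot>\<^sub>m pauli_mat n P) ^\<^sub>m m) $$ (i,j) / of_nat (fact m))
      = of_real (cosh c) * ?d + of_real (sinh c) * ?p"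
    unfolding power_entry by (rule sums_unique[symmetric])
  then show "mexp (of_real c \<cdot>\<^sub>m pauli_mat n P) $$ (i,j) = ?E $$ (i,j)"
    using i j by (simp add: mexp_def)
qed (simp_all add: mexp_def)

lemma pauli_mat_hermitian:
  assumes "i < 2^n" "j < 2^n"
  shows "pauli_mat n P $$ (j,i) = cnj (pauli_mat n P $$ (i,j))"
  using assms unfolding index_pauli_mat[OF assms] index_pauli_mat[OF assms(2,1)] cnj_prod
  by (intro prod.cong refl pauli1_hermitian) auto

lemma ctrans_mexp_pauli_mat:
  assumes "length P = n"
  shows "ctrans (mexp (of_real c \<cdot>\<^sub>m pauli_mat n P)) = mexp (of_real c \<cdot>\<^sub>m pauli_mat n P)"
  unfolding mexp_pauli_mat[OF assms]
proof (rule eq_matI)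
  fix i j
  assume "i < dim_row (of_real (cosh c) \<cdot>\<^sub>m 1\<^sub>m (2^n) + of_real (sinh c) \<cdot>\<^sub>m pauli_mat n P)"
    "j < dim_col (of_real (cosh c) \<cdot>\<^sub>m 1\<^sub>m (2^n) + of_real (sinh c) \<cdot>\<^sub>m pauli_mat n P)"
  then have "i < 2^n" "j < 2^n"
    by auto
  then show "ctrans (of_real (cosh c) \<cdot>\<^sub>m 1\<^sub>m (2^n) + of_real (sinh c) \<cdot>\<^sub>m pauli_mat n P) $$ (i,j)
      = (of_real (cosh c) \<cdot>\<^sub>m 1\<^sub>m (2^n) + of_real (sinh c) \<cdot>\<^sub>m pauli_mat n P) $$ (i,j)"
    by (simp add: ctrans_def pauli_mat_hermitian[of i n j])
qed (simp_all add: ctrans_def)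

lemma mult_identity_plus_smult_left:
  fixes A X :: "'a::comm_ring_1 mat"
  assumes "A \<in> carrier_mat d d" "X \<in> carrier_mat d d"
  shows "(a \<cdot>\<^sub>m 1\<^sub>m d + b \<cdot>\<^sub>m A) * X = a \<cdot>\<^sub>m X + b \<cdot>\<^sub>m (A * X)"
  by (simp only: add_mult_distrib_mat[OF smult_carrier_mat[OF one_carrier_mat]
        smult_carrier_mat[OF assms(1)] assms(2)]
      mult_smult_assoc_mat[OF one_carrier_mat assms(2)] mult_smult_assoc_mat[OF assms]
      left_mult_one_mat[OF assms(2)])

lemma mult_identity_plus_smult_right:
  fixes A X :: "'a::comm_ring_1 mat"
  assumes "A \<in> carrier_mat d d" "X \<in> carrier_mat d d"
  shows "X * (a \<cdot>\<^sub>m 1\<^sub>m d + b \<cdot>\<^sub>m A) = a \<cdot>\<^sub>m X + b \<cdot>\<^sub>m (X * A)"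
  by (simp only: mult_add_distrib_mat[OF assms(2) smult_carrier_mat[OF one_carrier_mat]
        smult_carrier_mat[OF assms(1)]]
      mult_smult_distrib[OF assms(2) one_carrier_mat] mult_smult_distrib[OF assms(2,1)]
      right_mult_one_mat[OF assms(2)])

lemma pauli_sandwich:
  fixes a b :: complex
  assumes P: "length P = n" and S: "length S = n"
  defines "E \<equiv> a \<cdot>\<^sub>m 1\<^sub>m (2^n) + b \<cdot>\<^sub>m pauli_mat n P"
  shows "E * pauli_mat n S * E
         = (a * a + b * b * pauli_phase P S * pauli_phase (pauli_mul P S) P) \<cdot>\<^sub>m pauli_mat n S
           + (a * b * (pauli_phase P S + pauli_phase S P)) \<cdot>\<^sub>m pauli_mat n (pauli_mul P S)"
proof -
  let ?S = "pauli_mat n S" and ?S' = "pauli_mat n (pauli_mul P S)" and ?P = "pauli_mat n P"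
  have PS: "?P * ?S = pauli_phase P S \<cdot>\<^sub>m ?S'"
    using P S by (simp add: pauli_mat_mult)
  have SP: "?S * ?P = pauli_phase S P \<cdot>\<^sub>m ?S'"
    using P S by (simp add: pauli_mat_mult pauli_mul_comm)
  have S'P: "?S' * ?P = pauli_phase (pauli_mul P S) P \<cdot>\<^sub>m ?S"
    using P S by (simp add: pauli_mat_mult pauli_mul_comm[of _ P])
  have ES: "E * ?S = a \<cdot>\<^sub>m ?S + (b * pauli_phase P S) \<cdot>\<^sub>m ?S'"
    unfolding E_def mult_identity_plus_smult_left[OF pauli_mat_carrier pauli_mat_carrier] PS
    by (simp only: smult_smult_mat)
  have ESP: "E * ?S * ?P = (a * pauli_phase S P) \<cdot>\<^sub>m ?S'
      + (b * pauli_phase P S * pauli_phase (pauli_mul P S) P) \<cdot>\<^sub>m ?S"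
    unfolding ES
    by (simp only: add_mult_distrib_mat[OF smult_carrier_mat[OF pauli_mat_carrier]
          smult_carrier_mat[OF pauli_mat_carrier] pauli_mat_carrier]
        mult_smult_assoc_mat[OF pauli_mat_carrier pauli_mat_carrier] SP S'P smult_smult_mat mult.assoc)
  have "E * ?S * E = a \<cdot>\<^sub>m (E * ?S) + b \<cdot>\<^sub>m (E * ?S * ?P)"
    unfolding E_def by (rule mult_identity_plus_smult_right) (simp_all add: E_def[symmetric] ES)
  also have "\<dots> = (a * a + b * b * pauli_phase P S * pauli_phase (pauli_mul P S) P) \<cdot>\<^sub>m ?S
           + (a * b * (pauli_phase P S + pauli_phase S P)) \<cdot>\<^sub>m ?S'"
    unfolding ESP unfolding ES by (rule eq_matI) (auto simp: algebra_simps)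
  finally show ?thesis .
qed

lemma mtrace_mult_sandwich:
  assumes Z: "Z \<in> carrier_mat d d" and X: "X \<in> carrier_mat d d" and E: "E \<in> carrier_mat d d"
  shows "mtrace (Z * (E * X * E)) = mtrace ((E * Z * E) * X)"
proof -
  have "Z * (E * X * E) = (Z * E * X) * E"
    by (simp only: assoc_mult_mat[OF E X E] assoc_mult_mat[OF mult_carrier_mat[OF Z E] X E]
        assoc_mult_mat[OF Z E mult_carrier_mat[OF X E]])
  then have "mtrace (Z * (E * X * E)) = mtrace (E * (Z * E * X))"
    using mtrace_comm[OF mult_carrier_mat[OF mult_carrier_mat[OF Z E] X] E] by simp
  also have "E * (Z * E * X) = (E * Z * E) * X"
    by (simp only: assoc_mult_mat[OF mult_carrier_mat[OF E Z] E X]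
        assoc_mult_mat[OF E Z mult_carrier_mat[OF E X]] assoc_mult_mat[OF Z E X])
  finally show ?thesis .
qed

lemma pcoef_pauli_sandwich:
  fixes a b :: complex
  assumes P: "length P = n" and S: "length S = n" and X: "X \<in> carrier_mat (2^n) (2^n)"
  defines "E \<equiv> a \<cdot>\<^sub>m 1\<^sub>m (2^n) + b \<cdot>\<^sub>m pauli_mat n P"
  shows "pcoef n S (E * X * E)
         = (a * a + b * b * pauli_phase P S * pauli_phase (pauli_mul P S) P) * pcoef n S X
           + (a * b * (pauli_phase P S + pauli_phase S P)) * pcoef n (pauli_mul P S) X"
proof -
  let ?S = "pauli_mat n S" and ?S' = "pauli_mat n (pauli_mul P S)"
  let ?\<alpha> = "a * a + b * b * pauli_phase P S * pauli_phase (pauli_mul P S) P"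
    and ?\<gamma> = "a * b * (pauli_phase P S + pauli_phase S P)"
  have E: "E \<in> carrier_mat (2^n) (2^n)"
    by (simp add: E_def)
  have "mtrace (?S * (E * X * E)) = mtrace ((E * ?S * E) * X)"
    by (rule mtrace_mult_sandwich[OF pauli_mat_carrier X E])
  also have "E * ?S * E = ?\<alpha> \<cdot>\<^sub>m ?S + ?\<gamma> \<cdot>\<^sub>m ?S'"
    unfolding E_def by (rule pauli_sandwich[OF P S])
  also have "mtrace ((?\<alpha> \<cdot>\<^sub>m ?S + ?\<gamma> \<cdot>\<^sub>m ?S') * X) = ?\<alpha> * mtrace (?S * X) + ?\<gamma> * mtrace (?S' * X)"
  proof -
    have SX: "?S * X \<in> carrier_mat (2^n) (2^n)" and S'X: "?S' * X \<in> carrier_mat (2^n) (2^n)"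
      using X by auto
    show ?thesis
      using X by (simp add: add_mult_distrib_mat[of _ "2^n" "2^n"] mult_smult_assoc_mat[of _ "2^n" "2^n"]
          mtrace_add[OF smult_carrier_mat[OF SX] smult_carrier_mat[OF S'X]]
          mtrace_smult[OF SX] mtrace_smult[OF S'X])
  qed
  finally show ?thesis
    by (simp add: pcoef_def add_divide_distrib)
qed

lemma norm_pcoef_mexp_sandwich_le:
  assumes P: "length P = n" and S: "length S = n" and X: "X \<in> carrier_mat (2^n) (2^n)"
    and c: "\<bar>c\<bar> \<le> \<delta>"
  defines "E \<equiv> mexp (of_real c \<cdot>\<^sub>m pauli_mat n P)"
  shows "cmod (pcoef n S (E * X * E))
         \<le> cosh (2 * \<delta>) * cmod (pcoef n S X) + sinh (2 * \<delta>) * cmod (pcoef n (pauli_mul P S) X)"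
proof -
  let ?a = "complex_of_real (cosh c)" and ?b = "complex_of_real (sinh c)"
  let ?\<alpha> = "?a * ?a + ?b * ?b * pauli_phase P S * pauli_phase (pauli_mul P S) P"
    and ?\<gamma> = "?a * ?b * (pauli_phase P S + pauli_phase S P)"
  have "cmod ?\<alpha> \<le> cmod (?a * ?a) + cmod (?b * ?b * pauli_phase P S * pauli_phase (pauli_mul P S) P)"
    by (rule norm_triangle_ineq)
  also have "\<dots> = cosh c ^ 2 + sinh c ^ 2"
    by (simp add: norm_mult power2_eq_square)
  also have "\<dots> = cosh \<bar>2 * c\<bar>"
    by (simp add: cosh_double)
  also have "\<dots> \<le> cosh (2 * \<delta>)"
    using c by (subst cosh_real_nonneg_le_iff) auto
  finally have \<alpha>: "cmod ?\<alpha> \<le> cosh (2 * \<delta>)" .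
  have "cmod ?\<gamma> \<le> \<bar>cosh c\<bar> * \<bar>sinh c\<bar> * 2"
    using norm_triangle_ineq[of "pauli_phase P S" "pauli_phase S P"]
    by (simp add: norm_mult mult_left_mono)
  also have "\<dots> = sinh \<bar>2 * c\<bar>"
    by (simp add: sinh_double abs_mult)
  also have "\<dots> \<le> sinh (2 * \<delta>)"
    by (simp only: sinh_real_le_iff) (use c in \<open>simp add: abs_mult\<close>)
  finally have \<gamma>: "cmod ?\<gamma> \<le> sinh (2 * \<delta>)" .
  have "pcoef n S (E * X * E) = ?\<alpha> * pcoef n S X + ?\<gamma> * pcoef n (pauli_mul P S) X"
    unfolding E_def mexp_pauli_mat[OF P] by (rule pcoef_pauli_sandwich[OF P S X])
  also have "cmod \<dots> \<le> cmod ?\<alpha> * cmod (pcoef n S X) + cmod ?\<gamma> * cmod (pcoef n (pauli_mul P S) X)"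
    by (metis norm_mult norm_triangle_ineq)
  also have "\<dots> \<le> cosh (2 * \<delta>) * cmod (pcoef n S X) + sinh (2 * \<delta>) * cmod (pcoef n (pauli_mul P S) X)"
    by (intro add_mono mult_right_mono \<alpha> \<gamma>) auto
  finally show ?thesis .
qed

lemma pauli_norm1_mexp_sandwich_le:
  assumes P: "length P = n" and X: "X \<in> carrier_mat (2^n) (2^n)" and c: "\<bar>c\<bar> \<le> \<delta>"
  defines "E \<equiv> mexp (of_real c \<cdot>\<^sub>m pauli_mat n P)"
  shows "pauli_norm1 n (E * X * E) \<le> exp (2 * \<delta>) * pauli_norm1 n X"
proof -
  have "pauli_norm1 n (E * X * E)
      \<le> (\<Sum>S\<in>pauli_strings n. cosh (2 * \<delta>) * cmod (pcoef n S X)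
                                 + sinh (2 * \<delta>) * cmod (pcoef n (pauli_mul P S) X))"
    unfolding pauli_norm1_def E_def
    by (intro sum_mono norm_pcoef_mexp_sandwich_le[OF P _ X c]) (simp add: pauli_strings_def)
  also have "\<dots> = cosh (2 * \<delta>) * pauli_norm1 n X
      + sinh (2 * \<delta>) * (\<Sum>S\<in>pauli_strings n. cmod (pcoef n (pauli_mul P S) X))"
    by (simp add: pauli_norm1_def sum.distrib sum_distrib_left)
  also have "(\<Sum>S\<in>pauli_strings n. cmod (pcoef n (pauli_mul P S) X)) = pauli_norm1 n X"
    unfolding pauli_norm1_def by (rule sum_pauli_strings_reindex_mul[OF P])
  finally show ?thesis
    by (simp add: cosh_plus_sinh flip: distrib_right)
qed

section \<open>Counting Pauli paths\<close>

lemma sum_Pow_insert: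
  assumes "finite A" "a \<notin> A"
  shows "(\<Sum>S\<in>Pow (insert a A). f S) = (\<Sum>S\<in>Pow A. f S) + (\<Sum>S\<in>Pow A. f (insert a S))"
proof -
  have "inj_on (insert a) (Pow A)"
    using assms(2) by (auto simp: inj_on_def)
  moreover have "Pow A \<inter> insert a ` Pow A = {}"
    using assms(2) by auto
  ultimately show ?thesis
    using assms(1) by (simp add: Pow_insert sum.union_disjoint sum.reindex)
qed

(* Unrolled, the recursion keeps R at the steps outside S and multiplies it by Qs i at the steps
   i in S; as y 0 vanishes away from the identity, only the sets S covering supp R contribute. *)
lemma pauli_path_bound:
  fixes y :: "nat \<Rightarrow> pauli list \<Rightarrow> real" and Qs :: "nat \<Rightarrow> pauli list"
  assumes ch: "0 \<le> ch" and sh: "0 \<le> sh"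
    and Qs: "\<And>j. j \<in> {1..m} \<Longrightarrow> length (Qs j) = n"
    and step: "\<And>j R. j < m \<Longrightarrow> length R = n \<Longrightarrow>
                 y (Suc j) R \<le> ch * y j R + sh * y j (pauli_mul (Qs (Suc j)) R)"
    and init: "\<And>R. length R = n \<Longrightarrow> y 0 R \<le> of_bool (supp R = {})"
    and R: "length R = n"
  shows "y m R \<le> (\<Sum>S\<in>Pow {1..m}. ch ^ (m - card S) * sh ^ card S
                                     * of_bool (supp R \<subseteq> (\<Union>i\<in>S. supp (Qs i))))"
  using Qs step R
proof (induction m arbitrary: R)
  case 0
  then show ?case
    using init by (simp del: sum_of_bool_eq)
next
  case (Suc m)
  let ?w = "\<lambda>m S. ch ^ (m - card S) * sh ^ card S"
    and ?cov = "\<lambda>R S. of_bool (supp R \<subseteq> (\<Union>i\<in>S. supp (Qs i))) :: real"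
  let ?R' = "pauli_mul (Qs (Suc m)) R"
  have len: "length (Qs (Suc m)) = n" "length ?R' = n"
    using Suc.prems by auto
  have IH: "y m R' \<le> (\<Sum>S\<in>Pow {1..m}. ?w m S * ?cov R' S)" if "length R' = n" for R'
    using Suc.prems that by (intro Suc.IH) auto
  have cov: "?cov ?R' S \<le> ?cov R (insert (Suc m) S)" for S
    using supp_subset_pauli_mul[of "Qs (Suc m)" R] len Suc.prems(3) by auto
  have "y (Suc m) R \<le> ch * y m R + sh * y m ?R'"
    using Suc.prems by (intro Suc.prems(2)) auto
  also have "\<dots> \<le> ch * (\<Sum>S\<in>Pow {1..m}. ?w m S * ?cov R S) + sh * (\<Sum>S\<in>Pow {1..m}. ?w m S * ?cov ?R' S)"
    using Suc.prems len by (intro add_mono mult_left_mono IH ch sh)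
  also have "\<dots> \<le> (\<Sum>S\<in>Pow {1..m}. ?w (Suc m) S * ?cov R S)
      + (\<Sum>S\<in>Pow {1..m}. ?w (Suc m) (insert (Suc m) S) * ?cov R (insert (Suc m) S))"
    unfolding sum_distrib_left
  proof (intro add_mono sum_mono)
    fix S
    assume S: "S \<in> Pow {1..m}"
    then have "finite S" "card S \<le> m" "Suc m \<notin> S"
      using finite_subset card_mono[of "{1..m}" S] by auto
    then have w: "?w (Suc m) S = ch * ?w m S" "?w (Suc m) (insert (Suc m) S) = sh * ?w m S"
      by (simp_all add: Suc_diff_le)
    show "ch * (?w m S * ?cov R S) \<le> ?w (Suc m) S * ?cov R S"
      by (simp add: w)
    show "sh * (?w m S * ?cov ?R' S) \<le> ?w (Suc m) (insert (Suc m) S) * ?cov R (insert (Suc m) S)"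
      unfolding w mult.assoc using ch sh cov by (intro mult_left_mono) auto
  qed
  also have "\<dots> = (\<Sum>S\<in>Pow {1..Suc m}. ?w (Suc m) S * ?cov R S)"
    using sum_Pow_insert[of "{1..m}" "Suc m" "\<lambda>S. ?w (Suc m) S * ?cov R S"]
    by (simp add: atLeastAtMostSuc_conv del: sum_mult_of_bool_eq)
  finally show ?case .
qed

definition hitting_weight :: "real \<Rightarrow> real \<Rightarrow> 'a set \<Rightarrow> 'a set \<Rightarrow> nat \<Rightarrow> real" where
  "hitting_weight ch sh T U r
     = (\<Sum>S\<in>Pow U. ch ^ (card U - card S) * sh ^ card S * of_bool (r \<le> card (S \<inter> T)))"

lemma hitting_weight_nonneg: "0 \<le> ch \<Longrightarrow> 0 \<le> sh \<Longrightarrow> 0 \<le> hitting_weight ch sh T U r"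
  unfolding hitting_weight_def by (intro sum_nonneg) auto

lemma hitting_weight_insert:
  assumes "finite U" "x \<notin> U"
  shows "hitting_weight ch sh T (insert x U) r
         = ch * hitting_weight ch sh T U r + sh * hitting_weight ch sh T U (if x \<in> T then r - 1 else r)"
  unfolding hitting_weight_def sum_Pow_insert[OF assms] sum_distrib_left
proof (intro arg_cong2[where f = "(+)"] sum.cong refl)
  fix S
  assume "S \<in> Pow U"
  then have S: "finite S" "x \<notin> S" "card S \<le> card U"
    using assms finite_subset card_mono by auto
  then show "ch ^ (card (insert x U) - card S) * sh ^ card S * of_bool (r \<le> card (S \<inter> T))
      = ch * (ch ^ (card U - card S) * sh ^ card S * of_bool (r \<le> card (S \<inter> T)))"
    using assms by (simp add: Suc_diff_le)
  have "card (insert x S \<inter> T) = card (S \<inter> T) + of_bool (x \<in> T)"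
    using S by (simp add: Int_insert_left)
  then show "ch ^ (card (insert x U) - card (insert x S)) * sh ^ card (insert x S)
               * of_bool (r \<le> card (insert x S \<inter> T))
      = sh * (ch ^ (card U - card S) * sh ^ card S
              * of_bool ((if x \<in> T then r - 1 else r) \<le> card (S \<inter> T)))"
    using S assms by (auto simp: mult_ac)
qed

lemma hitting_weight_le:
  fixes ch sh :: real
  assumes U: "finite U" and ch: "0 \<le> ch" and sh: "0 \<le> sh"
  shows "hitting_weight ch sh T U r \<le> real (card (U \<inter> T) choose r) * (sh / (ch + sh)) ^ r * (ch + sh) ^ card U"
  using U
proof (induction U arbitrary: r rule: finite_induct)
  case empty
  then show ?case
    by (cases r) (simp_all add: hitting_weight_def)
next
  case (insert x U)
  let ?e = "ch + sh" and ?s = "sh / (ch + sh)" and ?N = "card (U \<inter> T)" and ?F = "hitting_weight ch sh T U"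
  let ?B = "\<lambda>N r. real (N choose r) * ?s ^ r * ?e ^ card (insert x U)"
  have e: "0 \<le> ?e" and s: "0 \<le> ?s" and sh_eq: "sh = ?s * ?e"
    using ch sh by auto
  have IH: "?e * ?F r' \<le> ?B ?N r'" for r'
    using mult_left_mono[OF insert.IH e] insert.hyps by (simp add: mult_ac)
  show ?case
  proof (cases "x \<in> T \<and> r > 0")
    case True
    have "ch * ?F r \<le> ?e * ?F r"
      using ch sh by (intro mult_right_mono hitting_weight_nonneg) auto
    also have "\<dots> \<le> ?B ?N r"
      by (rule IH)
    moreover have "sh * ?F (r - 1) = ?s * (?e * ?F (r - 1))"
      by (subst sh_eq) (rule mult.assoc)
    ultimately have "ch * ?F r + sh * ?F (r - 1) \<le> ?B ?N r + ?s * (?e * ?F (r - 1))"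
      by linarith
    also have "\<dots> \<le> ?B ?N r + ?s * ?B ?N (r - 1)"
      using IH s by (intro add_left_mono mult_left_mono)
    also have "\<dots> = ?B (Suc ?N) r"
      using True by (cases r) (simp_all add: algebra_simps)
    finally show ?thesis
      using True insert.hyps by (simp add: hitting_weight_insert Int_insert_left)
  next
    case False
    have "real (card (insert x U \<inter> T) choose r) = real (?N choose r)"
      using False insert.hyps by (cases "x \<in> T") (auto simp: Int_insert_left)
    moreover have "ch * ?F r + sh * ?F r \<le> ?B ?N r"
      using IH by (simp add: distrib_right)
    ultimately show ?thesis
      using False insert.hyps by (auto simp: hitting_weight_insert)
  qed
qed

lemma power_div_fact_le_exp:
  fixes x :: real
  assumes "0 \<le> x"
  shows "x ^ n / fact n \<le> exp x"
proof -
  have exp_sums: "(\<lambda>m. x ^ m / fact m) sums exp x"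
    using exp_converges[of x] by (simp add: divide_inverse_commute)
  have "(\<Sum>m\<in>{n}. x ^ m / fact m) \<le> (\<Sum>m. x ^ m / fact m)"
    using exp_sums assms by (intro sum_le_suminf) (auto simp: sums_iff)
  then show ?thesis
    using exp_sums by (simp add: sums_iff)
qed

lemma sinh_div_exp_le:
  fixes x :: real
  assumes "0 \<le> x"
  shows "sinh x / exp x \<le> x"
proof -
  have "sinh x / exp x = (1 - exp (- (2 * x))) / 2"
    by (simp add: sinh_def field_simps exp_minus flip: exp_add)
  also have "\<dots> \<le> x"
    using exp_ge_add_one_self[of "- (2 * x)"] by simp
  finally show ?thesis .
qed

lemma binomial_le_exp_power:
  fixes c :: real
  assumes N: "real N \<le> c * real r"
  shows "real (N choose r) \<le> (exp 1 * c) ^ r"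
proof (cases "r = 0")
  case False
  have "0 \<le> c * real r"
    using N by (meson of_nat_0_le_iff order_trans)
  then have c: "0 \<le> c"
    using False by (simp add: zero_le_mult_iff)
  have "real (N choose r) * fact r \<le> real N ^ r"
    using binomial_fact_pow[of N r] by (metis of_nat_fact of_nat_le_iff of_nat_mult of_nat_power)
  then have "real (N choose r) \<le> real N ^ r / fact r"
    by (simp add: field_simps)
  also have "\<dots> \<le> (c * real r) ^ r / fact r"
    using N by (intro divide_right_mono power_mono) auto
  also have "\<dots> = c ^ r * (real r ^ r / fact r)"
    by (simp add: power_mult_distrib)
  also have "\<dots> \<le> c ^ r * exp (real r)"
    using c by (intro mult_left_mono power_div_fact_le_exp) auto
  also have "\<dots> = (exp 1 * c) ^ r"
    by (simp add: power_mult_distrib mult.commute flip: exp_of_nat_mult)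
  finally show ?thesis .
qed simp

lemma weight_le_mult_card_cover:
  assumes S: "finite S" and cover: "supp R \<subseteq> (\<Union>i\<in>S. supp (Qs i))"
    and w: "\<And>i. i \<in> S \<Longrightarrow> weight (Qs i) \<le> w"
  shows "weight R \<le> w * card (S \<inter> {i. supp (Qs i) \<inter> supp R \<noteq> {}})"
proof -
  let ?S = "S \<inter> {i. supp (Qs i) \<inter> supp R \<noteq> {}}"
  have "supp R \<subseteq> (\<Union>i\<in>?S. supp (Qs i))"
    using cover by blast
  then have "weight R \<le> card (\<Union>i\<in>?S. supp (Qs i))"
    unfolding weight_def using S by (intro card_mono) auto
  also have "\<dots> \<le> (\<Sum>i\<in>?S. weight (Qs i))"
    unfolding weight_def using S by (intro card_UN_le) auto
  also have "\<dots> \<le> w * card ?S"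
    using w sum_bounded_above[of ?S "\<lambda>i. weight (Qs i)" w] by (simp add: mult.commute)
  finally show ?thesis .
qed

lemma nat_ceiling_divide_le:
  fixes a w c :: nat
  assumes "a \<le> w * c"
  shows "nat \<lceil>real a / real w\<rceil> \<le> c"
proof (cases "w = 0")
  case False
  then have "real a / real w \<le> real c"
    using assms by (simp add: divide_le_eq mult.commute flip: of_nat_mult)
  then show ?thesis
    by (simp add: nat_le_iff ceiling_le_iff)
qed simp

lemma le_mult_nat_ceiling_divide:
  fixes a w :: nat
  assumes "0 < w"
  shows "a \<le> w * nat \<lceil>real a / real w\<rceil>"
proof -
  have "real a = real w * (real a / real w)"
    using assms by simp
  also have "\<dots> \<le> real w * of_int \<lceil>real a / real w\<rceil>"
    by (intro mult_left_mono le_of_int_ceiling) auto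
  also have "\<dots> = real (w * nat \<lceil>real a / real w\<rceil>)"
    by simp
  finally show ?thesis
    by (simp only: of_nat_le_iff)
qed

lemma sum_power_mult_le_telescope:
  fixes N h :: "nat \<Rightarrow> real"
  assumes q: "0 \<le> q" and step: "\<And>t. t < m \<Longrightarrow> N t + h t \<le> q * N (Suc t)"
  shows "(\<Sum>t<m. q ^ t * h t) \<le> q ^ m * N m - N 0"
proof -
  have "q ^ t * h t \<le> q ^ Suc t * N (Suc t) - q ^ t * N t" if "t < m" for t
    using mult_left_mono[OF step[OF that], of "q ^ t"] q by (simp add: algebra_simps)
  then have "(\<Sum>t<m. q ^ t * h t) \<le> (\<Sum>t<m. q ^ Suc t * N (Suc t) - q ^ t * N t)"
    by (intro sum_mono) auto
  also have "\<dots> = q ^ m * N m - N 0"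
    using sum_lessThan_telescope[of "\<lambda>t. q ^ t * N t" m] by simp
  finally show ?thesis .
qed

section \<open>Error of the weight-truncated propagation\<close>

locale truncated_pauli_propagation =
  fixes n k L D w :: nat and Qs :: "nat \<Rightarrow> pauli list" and cs :: "nat \<Rightarrow> real"
    and \<delta> :: real and Obs :: "complex mat"
  assumes length_Qs: "\<And>j. j \<in> {1..L} \<Longrightarrow> length (Qs j) = n"
    and weight_Qs: "\<And>j. j \<in> {1..L} \<Longrightarrow> weight (Qs j) \<le> w"
    and qubit_load: "\<And>q. q < n \<Longrightarrow> card {j\<in>{1..L}. q \<in> supp (Qs j)} \<le> D"
    and cs_le: "\<And>j. j \<in> {1..L} \<Longrightarrow> \<bar>cs j\<bar> \<le> \<delta>"
    and delta_nonneg: "0 \<le> \<delta>"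
    and growth_le_1: "2 * exp 1 * \<delta> * D * w \<le> 1"
    and Obs_carrier: "Obs \<in> carrier_mat (2^n) (2^n)"
begin

(* The theorem's g carries an extra factor e^delta, which this argument does not need. *)
abbreviation growth :: real where
  "growth \<equiv> 2 * exp 1 * \<delta> * D * w"

definition gate :: "nat \<Rightarrow> complex mat" where
  "gate j = mexp (of_real (cs j) \<cdot>\<^sub>m pauli_mat n (Qs j))"

definition A :: "nat \<Rightarrow> complex mat" where
  "A = fwd (\<lambda>j X. Mmap n (cs j) (Qs j) X) (1\<^sub>m (2^n))"

(* bwd counts the steps taken backwards from O_L = Obs, so Ot t is the paper's O_t. *)
definition Ot :: "nat \<Rightarrow> complex mat" where
  "Ot t = bwd (\<lambda>j X. trunc n k (Madj n (cs j) (Qs j) X)) L Obs (L - t)"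

definition Ot_untrunc :: "nat \<Rightarrow> complex mat" where
  "Ot_untrunc t = gate (Suc t) * Ot (Suc t) * gate (Suc t)"

lemma gate_carrier [simp]: "gate j \<in> carrier_mat (2^n) (2^n)"
  by (simp add: gate_def mexp_def)

lemma A_0: "A 0 = 1\<^sub>m (2^n)"
  by (simp add: A_def)

lemma A_Suc: "A (Suc j) = gate (Suc j) * A j * gate (Suc j)"
  by (simp add: A_def Mmap_def gate_def)

lemma A_carrier [simp]: "A j \<in> carrier_mat (2^n) (2^n)"
  by (induction j) (auto simp: A_0 A_Suc intro!: mult_carrier_mat[of _ "2^n" "2^n"])

lemma Ot_L: "Ot L = Obs"
  by (simp add: Ot_def)

lemma Ot_carrier [simp]: "Ot t \<in> carrier_mat (2^n) (2^n)"
  unfolding Ot_def by (cases "L - t") (simp_all add: Obs_carrier)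

lemma Ot_untrunc_carrier [simp]: "Ot_untrunc t \<in> carrier_mat (2^n) (2^n)"
  by (auto simp: Ot_untrunc_def intro!: mult_carrier_mat[of _ "2^n" "2^n"])

lemma Ot_step:
  assumes "t < L"
  shows "Ot t = trunc n k (Ot_untrunc t)"
proof -
  have "L - t = Suc (L - Suc t)" "L - (L - Suc t) = Suc t"
    using assms by simp_all
  then have "Ot t = trunc n k (Madj n (cs (Suc t)) (Qs (Suc t)) (Ot (Suc t)))"
    by (simp add: Ot_def)
  also have "Madj n (cs (Suc t)) (Qs (Suc t)) (Ot (Suc t)) = Ot_untrunc t"
    using assms length_Qs[of "Suc t"]
    by (simp add: Madj_def Ot_untrunc_def gate_def ctrans_mexp_pauli_mat)
  finally show ?thesis .
qed

lemma pauli_norm1_Ot_step: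
  assumes "t < L"
  shows "pauli_norm1 n (Ot t) + pauli_tail n k (Ot_untrunc t) \<le> exp (2 * \<delta>) * pauli_norm1 n (Ot (Suc t))"
proof -
  have "Suc t \<in> {1..L}"
    using assms by simp
  then have "pauli_norm1 n (Ot_untrunc t) \<le> exp (2 * \<delta>) * pauli_norm1 n (Ot (Suc t))"
    unfolding Ot_untrunc_def gate_def
    by (intro pauli_norm1_mexp_sandwich_le length_Qs cs_le Ot_carrier)
  then show ?thesis
    using pauli_norm1_trunc_add_tail[of n k "Ot_untrunc t"] by (simp add: Ot_step[OF assms])
qed

lemma norm_pcoef_A_le_path_sum:
  assumes R: "length R = n" and m: "m \<le> L"
  shows "cmod (pcoef n R (A m))
         \<le> (\<Sum>S\<in>Pow {1..m}. cosh (2 * \<delta>) ^ (m - card S) * sinh (2 * \<delta>) ^ card S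
                              * of_bool (supp R \<subseteq> (\<Union>i\<in>S. supp (Qs i))))"
proof (rule pauli_path_bound[where y = "\<lambda>j R. cmod (pcoef n R (A j))", OF _ _ _ _ _ R])
  fix j and R :: "pauli list"
  assume "j < m" "length R = n"
  then show "cmod (pcoef n R (A (Suc j)))
      \<le> cosh (2 * \<delta>) * cmod (pcoef n R (A j)) + sinh (2 * \<delta>) * cmod (pcoef n (pauli_mul (Qs (Suc j)) R) (A j))"
    unfolding A_Suc gate_def using m
    by (intro norm_pcoef_mexp_sandwich_le length_Qs cs_le A_carrier) auto
next
  fix R :: "pauli list"
  assume "length R = n"
  then show "cmod (pcoef n R (A 0)) \<le> of_bool (supp R = {})"
    by (simp add: A_0 pcoef_pauli_mat supp_eq_empty_iff flip: pauli_mat_replicate_PI)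
qed (use delta_nonneg m length_Qs in auto)

definition touching :: "pauli list \<Rightarrow> nat set" where
  "touching R = {i. supp (Qs i) \<inter> supp R \<noteq> {}}"

lemma card_touching_le:
  assumes R: "length R = n" and m: "m \<le> L"
  shows "card ({1..m} \<inter> touching R) \<le> D * weight R"
proof -
  have "{1..m} \<inter> touching R \<subseteq> (\<Union>q\<in>supp R. {j\<in>{1..L}. q \<in> supp (Qs j)})"
    using m by (auto simp: touching_def)
  then have "card ({1..m} \<inter> touching R) \<le> card (\<Union>q\<in>supp R. {j\<in>{1..L}. q \<in> supp (Qs j)})"
    by (intro card_mono) auto
  also have "\<dots> \<le> (\<Sum>q\<in>supp R. card {j\<in>{1..L}. q \<in> supp (Qs j)})"
    by (intro card_UN_le) simp
  also have "\<dots> \<le> D * weight R"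
    using sum_bounded_above[of "supp R" _ D] qubit_load R
    by (auto simp: weight_def supp_def mult.commute)
  finally show ?thesis .
qed

lemma card_touching_ge_if_cover:
  assumes S: "S \<subseteq> {1..L}" and cover: "supp R \<subseteq> (\<Union>i\<in>S. supp (Qs i))"
  shows "nat \<lceil>real (weight R) / real w\<rceil> \<le> card (S \<inter> touching R)"
proof (rule nat_ceiling_divide_le)
  show "weight R \<le> w * card (S \<inter> touching R)"
    unfolding touching_def using S cover
    by (intro weight_le_mult_card_cover weight_Qs) (auto intro: finite_subset)
qed

lemma binomial_growth_le:
  fixes N r :: nat
  assumes N: "N \<le> D * w * r"
  shows "real (N choose r) * (sinh (2 * \<delta>) / exp (2 * \<delta>)) ^ r \<le> growth ^ r"
proof -
  have s: "0 \<le> sinh (2 * \<delta>) / exp (2 * \<delta>)" "sinh (2 * \<delta>) / exp (2 * \<delta>) \<le> 2 * \<delta>"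
    using delta_nonneg sinh_div_exp_le[of "2 * \<delta>"] by auto
  have "real (N choose r) \<le> (exp 1 * (D * w)) ^ r"
    using N by (intro binomial_le_exp_power) (simp flip: of_nat_mult)
  then have "real (N choose r) * (sinh (2 * \<delta>) / exp (2 * \<delta>)) ^ r
      \<le> (exp 1 * (D * w)) ^ r * (2 * \<delta>) ^ r"
    using s by (intro mult_mono power_mono) auto
  also have "\<dots> = (exp 1 * (D * w) * (2 * \<delta>)) ^ r"
    by (rule power_mult_distrib[symmetric])
  also have "exp 1 * (D * w) * (2 * \<delta>) = growth"
    by (simp add: mult_ac)
  finally show ?thesis .
qed

lemma binomial_touching_le:
  assumes R: "length R = n" and m: "m \<le> L"
  defines "r \<equiv> nat \<lceil>real (weight R) / real w\<rceil>"
  shows "real (card ({1..m} \<inter> touching R) choose r) * (sinh (2 * \<delta>) / exp (2 * \<delta>)) ^ r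
         \<le> growth ^ r"
proof (cases "w = 0")
  case False
  have "card ({1..m} \<inter> touching R) \<le> D * weight R"
    by (rule card_touching_le[OF R m])
  also have "\<dots> \<le> D * (w * r)"
    using False le_mult_nat_ceiling_divide[of w "weight R"] by (simp add: r_def)
  finally show ?thesis
    by (intro binomial_growth_le) (simp add: mult.assoc)
next
  (* for w = 0 the division by zero makes r = 0 *)
  case True
  then show ?thesis
    by (simp add: r_def)
qed

lemma norm_pcoef_A_le:
  assumes R: "length R = n" and k: "k \<le> weight R" and m: "m \<le> L"
  shows "cmod (pcoef n R (A m)) \<le> exp (2 * \<delta>) ^ m * growth ^ nat \<lceil>real k / real w\<rceil>"
proof -
  let ?ch = "cosh (2 * \<delta>)" and ?sh = "sinh (2 * \<delta>)" and ?r = "nat \<lceil>real (weight R) / real w\<rceil>"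
  have ch: "0 \<le> ?ch" and sh: "0 \<le> ?sh"
    using delta_nonneg by auto
  have "cmod (pcoef n R (A m)) \<le> (\<Sum>S\<in>Pow {1..m}. ?ch ^ (m - card S) * ?sh ^ card S
                                    * of_bool (supp R \<subseteq> (\<Union>i\<in>S. supp (Qs i))))"
    by (rule norm_pcoef_A_le_path_sum[OF R m])
  also have "\<dots> \<le> hitting_weight ?ch ?sh (touching R) {1..m} ?r"
    unfolding hitting_weight_def card_atLeastAtMost diff_Suc_1
  proof (intro sum_mono mult_left_mono)
    fix S
    assume "S \<in> Pow {1..m}"
    then have S: "S \<subseteq> {1..L}"
      using m by auto
    have "?r \<le> card (S \<inter> touching R)" if "supp R \<subseteq> (\<Union>i\<in>S. supp (Qs i))"
      using card_touching_ge_if_cover[OF S that] .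
    then show "of_bool (supp R \<subseteq> (\<Union>i\<in>S. supp (Qs i))) \<le> (of_bool (?r \<le> card (S \<inter> touching R)) :: real)"
      by auto
  qed (use ch sh in auto)
  also have "\<dots> \<le> real (card ({1..m} \<inter> touching R) choose ?r) * (?sh / exp (2 * \<delta>)) ^ ?r
                   * exp (2 * \<delta>) ^ m"
    using hitting_weight_le[of "{1..m}" ?ch ?sh "touching R" ?r] ch sh by (simp add: cosh_plus_sinh)
  also have "\<dots> \<le> growth ^ ?r * exp (2 * \<delta>) ^ m"
    by (intro mult_right_mono binomial_touching_le[OF R m]) simp
  also have "\<dots> \<le> growth ^ nat \<lceil>real k / real w\<rceil> * exp (2 * \<delta>) ^ m"
  proof (intro mult_right_mono power_decreasing)
    show "nat \<lceil>real k / real w\<rceil> \<le> ?r"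
      using k by (intro nat_mono ceiling_mono divide_right_mono) auto
  qed (use growth_le_1 delta_nonneg in auto)
  finally show ?thesis
    by (simp add: mult.commute)
qed

lemma mtrace_step_le:
  assumes t: "t < L"
  shows "cmod (mtrace (Ot (Suc t) * A (Suc t)) - mtrace (Ot t * A t))
         \<le> 2^n * (exp (2 * \<delta>) ^ t * growth ^ nat \<lceil>real k / real w\<rceil> * pauli_tail n k (Ot_untrunc t))"
proof -
  let ?c = "exp (2 * \<delta>) ^ t * growth ^ nat \<lceil>real k / real w\<rceil>"
  have "mtrace (Ot (Suc t) * A (Suc t)) = mtrace (Ot_untrunc t * A t)"
    unfolding A_Suc Ot_untrunc_def by (rule mtrace_mult_sandwich[of _ "2^n"]) simp_all
  then have "cmod (mtrace (Ot (Suc t) * A (Suc t)) - mtrace (Ot t * A t))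
      = cmod (mtrace (Ot_untrunc t * A t) - mtrace (trunc n k (Ot_untrunc t) * A t))"
    by (simp add: Ot_step[OF t])
  also have "\<dots> \<le> 2^n * (\<Sum>R\<in>{R\<in>pauli_strings n. k \<le> weight R}.
                           cmod (pcoef n R (A t)) * cmod (pcoef n R (Ot_untrunc t)))"
    by (rule mtrace_mult_trunc_diff) simp_all
  also have "\<dots> \<le> 2^n * (\<Sum>R\<in>{R\<in>pauli_strings n. k \<le> weight R}. ?c * cmod (pcoef n R (Ot_untrunc t)))"
    using t by (intro mult_left_mono sum_mono mult_right_mono norm_pcoef_A_le)
      (auto simp: pauli_strings_def)
  also have "\<dots> = 2^n * (?c * pauli_tail n k (Ot_untrunc t))"
    by (simp add: pauli_tail_def sum_distrib_left)
  finally show ?thesis .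
qed

theorem truncation_error_le:
  "cmod (mtrace (bwd (\<lambda>j X. trunc n k (Madj n (cs j) (Qs j) X)) L Obs L)
         - mtrace (Obs * fwd (\<lambda>j X. Mmap n (cs j) (Qs j) X) (1\<^sub>m (2^n)) L))
   \<le> 2^n * exp (2 * \<delta>) ^ L * growth ^ nat \<lceil>real k / real w\<rceil> * pauli_norm1 n Obs"
proof -
  define H where "H t = mtrace (Ot t * A t)" for t
  let ?c = "growth ^ nat \<lceil>real k / real w\<rceil>"
  have c: "0 \<le> ?c"
    using delta_nonneg by simp
  have "H 0 = mtrace (bwd (\<lambda>j X. trunc n k (Madj n (cs j) (Qs j) X)) L Obs L)"
    unfolding H_def A_0 right_mult_one_mat[OF Ot_carrier] by (simp add: Ot_def)
  moreover have "H L = mtrace (Obs * fwd (\<lambda>j X. Mmap n (cs j) (Qs j) X) (1\<^sub>m (2^n)) L)"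
    by (simp add: H_def Ot_L A_def)
  ultimately have "cmod (mtrace (bwd (\<lambda>j X. trunc n k (Madj n (cs j) (Qs j) X)) L Obs L)
         - mtrace (Obs * fwd (\<lambda>j X. Mmap n (cs j) (Qs j) X) (1\<^sub>m (2^n)) L))
      = cmod (H L - H 0)"
    by (simp add: norm_minus_commute)
  also have "\<dots> = cmod (\<Sum>t<L. H (Suc t) - H t)"
    by (simp add: sum_lessThan_telescope)
  also have "\<dots> \<le> (\<Sum>t<L. cmod (H (Suc t) - H t))"
    by (rule norm_sum)
  also have "\<dots> \<le> (\<Sum>t<L. 2^n * ?c * (exp (2 * \<delta>) ^ t * pauli_tail n k (Ot_untrunc t)))"
    using mtrace_step_le by (intro sum_mono) (simp add: H_def mult_ac)
  also have "\<dots> = 2^n * ?c * (\<Sum>t<L. exp (2 * \<delta>) ^ t * pauli_tail n k (Ot_untrunc t))"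
    by (simp add: sum_distrib_left)
  also have "\<dots> \<le> 2^n * ?c * (exp (2 * \<delta>) ^ L * pauli_norm1 n (Ot L) - pauli_norm1 n (Ot 0))"
    using c by (intro mult_left_mono sum_power_mult_le_telescope pauli_norm1_Ot_step) auto
  also have "\<dots> \<le> 2^n * ?c * (exp (2 * \<delta>) ^ L * pauli_norm1 n Obs)"
    using c by (intro mult_left_mono) (auto simp: Ot_L pauli_norm1_nonneg)
  finally show ?thesis
    by (simp add: mult_ac)
qed

end

section \<open>Periodic orderings\<close>

lemma term_at_in_set: "ord \<noteq> [] \<Longrightarrow> term_at ord j \<in> set ord"
  by (simp add: term_at_def)

lemma card_term_at_le:
  assumes "distinct ord"
  shows "card {j\<in>{1..(p + 1) * length ord}. P (term_at ord j)} \<le> (p + 1) * card {a\<in>set ord. P a}"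
proof -
  let ?M = "length ord" and ?I = "{i. i < length ord \<and> P (ord ! i)}"
  have sub: "{j\<in>{1..(p + 1) * ?M}. P (term_at ord j)} \<subseteq> (\<lambda>(i, q). q * ?M + i + 1) ` (?I \<times> {..p})"
  proof
    fix j
    assume j: "j \<in> {j\<in>{1..(p + 1) * ?M}. P (term_at ord j)}"
    then have M: "0 < ?M"
      by (cases "?M = 0") auto
    have "(j - 1) div ?M < p + 1"
      using j M by (auto simp: div_less_iff_less_mult)
    moreover have "(j - 1) mod ?M \<in> ?I"
      using j M by (simp add: term_at_def)
    moreover have "j = (j - 1) div ?M * ?M + (j - 1) mod ?M + 1"
      using j by simp
    ultimately show "j \<in> (\<lambda>(i, q). q * ?M + i + 1) ` (?I \<times> {..p})"
      by (intro image_eqI[where x = "((j - 1) mod ?M, (j - 1) div ?M)"]) auto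
  qed
  have "card {j\<in>{1..(p + 1) * ?M}. P (term_at ord j)} \<le> card ((\<lambda>(i, q). q * ?M + i + 1) ` (?I \<times> {..p}))"
    by (rule card_mono[OF _ sub]) auto
  also have "\<dots> \<le> card (?I \<times> {..p})"
    by (rule card_image_le) auto
  also have "\<dots> = (p + 1) * card ?I"
    by (simp add: card_cartesian_product)
  also have "?I = {i\<in>{..<?M}. P (ord ! i)}"
    by auto
  also have "card \<dots> = card {a\<in>set ord. P a}"
  proof -
    have "{a\<in>set ord. P a} = (!) ord ` {i\<in>{..<?M}. P (ord ! i)}"
      by (auto simp: in_set_conv_nth)
    moreover have "inj_on ((!) ord) {i\<in>{..<?M}. P (ord ! i)}"
      using assms by (auto simp: inj_on_def nth_eq_iff_index_eq)
    ultimately show ?thesis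
      by (simp add: card_image)
  qed
  finally show ?thesis .
qed

lemma truncated_pauli_propagation_periodic:
  assumes "\<forall>a\<in>set ord. length (Q a) = n" "\<forall>a\<in>set ord. weight (Q a) \<le> w"
    and "\<forall>a\<in>set ord. \<bar>lam a\<bar> \<le> 1" "\<forall>q<n. card {a\<in>set ord. q \<in> supp (Q a)} \<le> ell"
    and "distinct ord" "0 \<le> \<delta>" "2 * exp 1 * \<delta> * real ((p + 1) * ell) * real w \<le> 1"
    and "Obs \<in> carrier_mat (2^n) (2^n)"
  shows "truncated_pauli_propagation n ((p + 1) * length ord) ((p + 1) * ell) w
           (\<lambda>j. Q (term_at ord j)) (\<lambda>j. \<delta> * lam (term_at ord j)) \<delta> Obs"
proof
  have "term_at ord j \<in> set ord" if "j \<in> {1..(p + 1) * length ord}" for j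
    using that term_at_in_set[of ord j] by (cases "ord = []") auto
  then show "length (Q (term_at ord j)) = n" "weight (Q (term_at ord j)) \<le> w"
    "\<bar>\<delta> * lam (term_at ord j)\<bar> \<le> \<delta>" if "j \<in> {1..(p + 1) * length ord}" for j
    using that assms by (auto simp: abs_mult mult_left_le)
  fix q
  assume "q < n"
  then show "card {j\<in>{1..(p + 1) * length ord}. q \<in> supp (Q (term_at ord j))} \<le> (p + 1) * ell"
    using card_term_at_le[OF assms(5), of p "\<lambda>a. q \<in> supp (Q a)"] assms(4)
    by (meson le_trans mult_le_mono2)
qed (use assms in auto)

theorem mainTheorem16:
  fixes n w ell p k :: nat
    and T :: "'a set" and lam :: "'a \<Rightarrow> real" and Q :: "'a \<Rightarrow> pauli list"
    and ord :: "'a list" and \<delta> :: real and Obs :: "complex mat"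
  assumes Qlen: "\<forall>a\<in>T. length (Q a) = n"
    and lam_bd: "\<forall>a\<in>T. \<bar>lam a\<bar> \<le> 1"
    and wt: "\<forall>a\<in>T. weight (Q a) \<le> w"
    and deg: "\<forall>q<n. card {a\<in>T. q \<in> supp (Q a)} \<le> ell"
    and ord: "distinct ord" "set ord = T"
    and delta: "\<delta> > 0"
    and k: "k \<ge> 1"
    and Obs_dim: "Obs \<in> carrier_mat (2^n) (2^n)"
    and g_le: "2 * exp 1 * ((real p + 1) * \<delta>) * real ell * real w * exp \<delta> \<le> 1"
  shows "cmod (mtrace (bwd (\<lambda>j X. trunc n k (Madj n (\<delta> * lam (term_at ord j)) (Q (term_at ord j)) X))
                        ((p + 1) * length ord) Obs ((p + 1) * length ord))
              - mtrace (Obs * fwd (\<lambda>j X. Mmap n (\<delta> * lam (term_at ord j)) (Q (term_at ord j)) X)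
                        (1\<^sub>m (2^n)) ((p + 1) * length ord)))
         \<le> 2^n * exp (4 * ((real p + 1) * \<delta>) * real (length ord))
             * (2 * exp 1 * ((real p + 1) * \<delta>) * real ell * real w * exp \<delta>) ^ nat \<lceil>real k / real w\<rceil>
             * pauli_norm1 n Obs"
proof -
  let ?L = "(p + 1) * length ord" and ?r = "nat \<lceil>real k / real w\<rceil>"
    and ?growth = "2 * exp 1 * \<delta> * real ((p + 1) * ell) * real w"
    and ?g = "2 * exp 1 * ((real p + 1) * \<delta>) * real ell * real w * exp \<delta>"
  have growth_le: "?growth \<le> ?g"
    using delta mult_left_mono[of 1 "exp \<delta>" "2 * exp 1 * ((real p + 1) * \<delta>) * real ell * real w"]
    by (simp add: algebra_simps)
  interpret truncated_pauli_propagation n k ?L "(p + 1) * ell" w "\<lambda>j. Q (term_at ord j)"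
    "\<lambda>j. \<delta> * lam (term_at ord j)" \<delta> Obs
    by (intro truncated_pauli_propagation_periodic order_trans[OF growth_le g_le]) (use assms in auto)
  have exp_le: "exp (2 * \<delta>) ^ ?L \<le> exp (4 * ((real p + 1) * \<delta>) * real (length ord))"
    using delta by (simp add: algebra_simps flip: exp_of_nat_mult)
  have "?growth ^ ?r \<le> ?g ^ ?r"
    using delta by (intro power_mono growth_le) simp
  then have "2^n * exp (2 * \<delta>) ^ ?L * ?growth ^ ?r * pauli_norm1 n Obs
      \<le> 2^n * exp (4 * ((real p + 1) * \<delta>) * real (length ord)) * ?g ^ ?r * pauli_norm1 n Obs"
    using delta by (intro mult_right_mono[OF mult_mono[OF mult_left_mono[OF exp_le]]])
      (auto simp: pauli_norm1_nonneg)
  then show ?thesis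
    using truncation_error_le by linarith
qed

end
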